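(* Let $O_{(4,1)}(x,y,z,w)=x^4z^2w^2+y^4x^2w^2+z^4x^2y^2+w^4y^2z^2-4x^2y^2z^2w^2$, let $0\le a\le1$ and $\alpha,\beta\in\mathbb R$. If $F_1=a\,O_{(4,1)}+xyzw(\alpha x^2z^2+\beta y^2w^2)$ is positive semidefinite on $\mathbb R^4$, then $\alpha=\beta=0$. *)

theory Defs
  imports Complex_Main
begin

definition O41 :: "real \<Rightarrow> real \<Rightarrow> real \<Rightarrow> real \<Rightarrow> real" where
  "O41 x y z w = x^4*z^2*w^2 + y^4*x^2*w^2 + z^4*x^2*y^2 + w^4*y^2*z^2 - 4*x^2*y^2*z^2*w^2"

end

theory Submission
  imports Defs
begin

text \<open>On the lines \<open>(x, 1, 1, \<pm>1)\<close> the form \<open>O41\<close> is the square \<open>(x\<^sup>2 - 1)\<^sup>2\<close>, vanishing at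
  \<open>x = 1\<close>, while the mixed term is only linear in \<open>x\<^sup>2 - 1\<close>: once \<open>\<beta> = -\<alpha>\<close> is forced at the
  points \<open>(1, 1, 1, \<pm>1)\<close>, the form restricted to such a line is
  \<open>(x\<^sup>2 - 1) (a (x\<^sup>2 - 1) + \<alpha> w x)\<close>, and nonnegativity for \<open>x > 1\<close> gives \<open>\<alpha> w \<ge> 0\<close> in the limit
  \<open>x \<rightarrow> 1\<close>.\<close>

lemma O41_unit_line: "w\<^sup>2 = 1 \<Longrightarrow> O41 x 1 1 w = (x\<^sup>2 - 1)\<^sup>2"
  for x w :: real
  by (simp add: O41_def power2_eq_square power4_eq_xxxx algebra_simps)

lemma nonneg_at_right_imp_nonneg:
  fixes g :: "real \<Rightarrow> real"
  assumes "isCont g c" and "\<And>x. c < x \<Longrightarrow> 0 \<le> g x"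
  shows "0 \<le> g c"
proof (rule tendsto_lowerbound)
  show "(g \<longlongrightarrow> g c) (at_right c)"
    using assms(1) by (simp add: isCont_def filterlim_at_split)
  show "\<forall>\<^sub>F x in at_right c. 0 \<le> g x"
    using assms(2) by (intro eventually_at_rightI[of c "c + 1"]) auto
qed simp

theorem lemma4:
  fixes a \<alpha> \<beta> :: real
  assumes "0 \<le> a" and "a \<le> 1"
    and "\<forall>x y z w :: real. 0 \<le> a * O41 x y z w + x*y*z*w*(\<alpha>*x^2*z^2 + \<beta>*y^2*w^2)"
  shows "\<alpha> = 0 \<and> \<beta> = 0"
proof -
  have F_line: "0 \<le> a * (x\<^sup>2 - 1)\<^sup>2 + x*w*(\<alpha>*x\<^sup>2 + \<beta>)" if "w\<^sup>2 = 1" for x w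
    using assms(3)[rule_format, of x 1 1 w] O41_unit_line[OF that] that by simp
  have \<beta>: "\<beta> = -\<alpha>"
    using F_line[of 1 1] F_line[of "-1" 1] by simp
  have "0 \<le> \<alpha> * w" if w: "w\<^sup>2 = 1" for w
  proof -
    have "0 \<le> a * (1\<^sup>2 - 1) + \<alpha> * w * 1"
    proof (rule nonneg_at_right_imp_nonneg[where g = "\<lambda>x. a * (x\<^sup>2 - 1) + \<alpha> * w * x"])
      fix x :: real
      assume "1 < x"
      then have "0 < x\<^sup>2 - 1"
        by (simp add: one_less_power)
      moreover have "a * (x\<^sup>2 - 1)\<^sup>2 + x*w*(\<alpha>*x\<^sup>2 + \<beta>) = (x\<^sup>2 - 1) * (a * (x\<^sup>2 - 1) + \<alpha> * w * x)"
        unfolding \<beta> by (simp add: power2_eq_square algebra_simps)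
      ultimately have "0 \<le> (x\<^sup>2 - 1) * (a * (x\<^sup>2 - 1) + \<alpha> * w * x)"
        using F_line[OF w, of x] by simp
      with \<open>0 < x\<^sup>2 - 1\<close> show "0 \<le> a * (x\<^sup>2 - 1) + \<alpha> * w * x"
        by (simp add: zero_le_mult_iff)
    qed (intro continuous_intros)
    then show ?thesis by simp
  qed
  from this[of 1] this[of "-1"] \<beta> show ?thesis by simp
qed

end
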